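(* For $n\ge 2$, $$|\mathcal C_n(321)|=|\mathcal A_{n-1}|,$$ where $\mathcal A_{m}$ is the set of permutations in $S_{m}$ avoiding all six vincular patterns $\underline{32}\,\underline{41}$, $\underline{14}\,\underline{23}$, $\underline{41}\,\underline{32}$, $\underline{23}\,\underline{14}$, $\underline{23}\,\underline{1}$, $\underline{1}\,\underline{32}$.
   Context: Permutations of $[n]=\{1,\dots,n\}$ are written in one-line notation $\pi=\pi_1\cdots\pi_n$. A permutation contains $321$ if there are $i<j<k$ with $\pi_i>\pi_j>\pi_k$, and avoids $321$ otherwise. $\mathcal C_n$ is the set of cyclic permutations of $[n]$ (a single $n$-cycle), and $\mathcal C_n(321)$ those avoiding $321$. Vincular patterns: for a sequence $w=w_1\cdots w_N$ of distinct integers, - $w$ contains $\underline{32}\,\underline{41}$ if there are $i,j$ with $i+2\le j\le N-1$ and $w_{j+1}<w_{i+1}<w_i<w_j$; - $w$ contains $\underline{14}\,\underline{23}$ if there are such $i,j$ with $w_i<w_j<w_{j+1}<w_{i+1}$; - $w$ contains $\underline{41}\,\underline{32}$ if there are such $i,j$ with $w_{i+1}<w_{j+1}<w_j<w_i$; - $w$ contains $\underline{23}\,\underline{14}$ if there are such $i,j$ with $w_j<w_i<w_{i+1}<w_{j+1}$; - $w$ contains $\underline{23}\,\underline{1}$ if there is $i$ with $i+1\le N-1$ and $w_N<w_i<w_{i+1}$; - $w$ contains $\underline{1}\,\underline{32}$ if there is $j$ with $2\le j\le N-1$ and $w_1<w_{j+1}<w_j$. $w$ avoids a pattern if it does not contain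 it. *)

theory Defs
  imports "HOL-Combinatorics.Permutations"
begin

(* Permutations of [n] = {1..n} are functions p :: nat => nat with p permutes {1..n};
   the one-line notation is p 1, p 2, ..., p n (positions are 1-indexed). *)

definition contains321 :: "nat \<Rightarrow> (nat \<Rightarrow> nat) \<Rightarrow> bool" where
  "contains321 n p \<longleftrightarrow> (\<exists>i j k. 1 \<le> i \<and> i < j \<and> j < k \<and> k \<le> n \<and> p i > p j \<and> p j > p k)"

(* cyclic permutation of [n]: a single n-cycle, i.e. the orbit of 1 is all of [n] *)
definition cyclic_perm :: "nat \<Rightarrow> (nat \<Rightarrow> nat) \<Rightarrow> bool" where
  "cyclic_perm n p \<longleftrightarrow> p permutes {1..n} \<and> (\<forall>x\<in>{1..n}. \<exists>k. (p ^^ k) 1 = x)"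

definition C321 :: "nat \<Rightarrow> (nat \<Rightarrow> nat) set" where
  "C321 n = {p. cyclic_perm n p \<and> \<not> contains321 n p}"

definition has_3241 :: "nat \<Rightarrow> (nat \<Rightarrow> nat) \<Rightarrow> bool" where
  "has_3241 N w \<longleftrightarrow> (\<exists>i j. 1 \<le> i \<and> i + 2 \<le> j \<and> j \<le> N - 1 \<and>
      w (j+1) < w (i+1) \<and> w (i+1) < w i \<and> w i < w j)"

definition has_1423 :: "nat \<Rightarrow> (nat \<Rightarrow> nat) \<Rightarrow> bool" where
  "has_1423 N w \<longleftrightarrow> (\<exists>i j. 1 \<le> i \<and> i + 2 \<le> j \<and> j \<le> N - 1 \<and>
      w i < w j \<and> w j < w (j+1) \<and> w (j+1) < w (i+1))"

definition has_4132 :: "nat \<Rightarrow> (nat \<Rightarrow> nat) \<Rightarrow> bool" where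
  "has_4132 N w \<longleftrightarrow> (\<exists>i j. 1 \<le> i \<and> i + 2 \<le> j \<and> j \<le> N - 1 \<and>
      w (i+1) < w (j+1) \<and> w (j+1) < w j \<and> w j < w i)"

definition has_2314 :: "nat \<Rightarrow> (nat \<Rightarrow> nat) \<Rightarrow> bool" where
  "has_2314 N w \<longleftrightarrow> (\<exists>i j. 1 \<le> i \<and> i + 2 \<le> j \<and> j \<le> N - 1 \<and>
      w j < w i \<and> w i < w (i+1) \<and> w (i+1) < w (j+1))"

definition has_231 :: "nat \<Rightarrow> (nat \<Rightarrow> nat) \<Rightarrow> bool" where
  "has_231 N w \<longleftrightarrow> (\<exists>i. 1 \<le> i \<and> i + 1 \<le> N - 1 \<and> w N < w i \<and> w i < w (i+1))"

definition has_132 :: "nat \<Rightarrow> (nat \<Rightarrow> nat) \<Rightarrow> bool" where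
  "has_132 N w \<longleftrightarrow> (\<exists>j. 2 \<le> j \<and> j \<le> N - 1 \<and> w 1 < w (j+1) \<and> w (j+1) < w j)"

definition A_set :: "nat \<Rightarrow> (nat \<Rightarrow> nat) set" where
  "A_set m = {p. p permutes {1..m} \<and> \<not> has_3241 m p \<and> \<not> has_1423 m p \<and>
     \<not> has_4132 m p \<and> \<not> has_2314 m p \<and> \<not> has_231 m p \<and> \<not> has_132 m p}"

end

(* A permutation \<pi> of [n] contains 321 iff it has an inversion a < b, \<pi> b < \<pi> a, with b \<le> \<pi> b or
   \<pi> a \<le> a: the middle entry of an occurrence of 321 yields one, and in a 321-avoiding permutation the
   values below \<pi> b (resp. above \<pi> a) would have to occupy too few positions.

   Cyclic permutations of [n] correspond bijectively to permutations w of [n-1] via the cycle notation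
   (w 1 ... w (n-1) n), i.e. \<pi> (w i) = w (i+1), \<pi> (w (n-1)) = n, \<pi> n = w 1.  Writing the ends of such
   an inversion as entries of w (or as n), the case b \<le> \<pi> b gives exactly the patterns 14-23, 23-14 and
   23-1 of w, and the case \<pi> a \<le> a the patterns 32-41, 41-32 and 1-32. *)

theory Submission
  imports Defs "HOL-Combinatorics.Cycles" "HOL-Combinatorics.Orbits"
begin

lemma permutes_interval_bounds:
  assumes "\<pi> permutes {1..n}" "1 \<le> x" "x \<le> n"
  shows "1 \<le> \<pi> x" "\<pi> x \<le> n"
  using assms permutes_in_image[OF assms(1), of x] by simp_all

lemma permutes_preimage:
  assumes "w permutes S" "x \<in> S"
  obtains i where "i \<in> S" "w i = x"
  using assms by (metis permutes_image imageE)

lemma contains321_inv: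
  assumes "\<pi> permutes {1..n}" and "contains321 n \<pi>"
  shows "contains321 n (inv \<pi>)"
proof -
  obtain i j k where ijk: "1 \<le> i" "i < j" "j < k" "k \<le> n" "\<pi> j < \<pi> i" "\<pi> k < \<pi> j"
    using assms(2) unfolding contains321_def by blast
  have "1 \<le> \<pi> k" "\<pi> i \<le> n"
    using ijk permutes_interval_bounds[OF assms(1)] by simp_all
  then show ?thesis
    unfolding contains321_def using ijk permutes_inverses(2)[OF assms(1)]
    by (intro exI[of _ "\<pi> k"] exI[of _ "\<pi> j"] exI[of _ "\<pi> i"]) simp
qed

lemma contains321_inv_iff:
  assumes "\<pi> permutes {1..n}"
  shows "contains321 n (inv \<pi>) \<longleftrightarrow> contains321 n \<pi>"
  using contains321_inv[OF permutes_inv[OF assms]] contains321_inv[OF assms]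
  by (auto simp: permutes_inv_inv[OF assms])

lemma avoids321_inversion_right_end:
  assumes \<pi>: "\<pi> permutes {1..n}" and avoid: "\<not> contains321 n \<pi>"
    and ab: "1 \<le> a" "a < b" "b \<le> n" "\<pi> b < \<pi> a"
  shows "\<pi> b < b"
proof (rule ccontr)
  assume "\<not> \<pi> b < b"
  have "{1..<\<pi> b} \<subseteq> \<pi> ` ({1..<b} - {a})"
  proof
    fix v assume v: "v \<in> {1..<\<pi> b}"
    have "\<pi> b \<le> n" using ab permutes_interval_bounds[OF \<pi>, of b] by simp
    with v have "v \<in> \<pi> ` {1..n}" using permutes_image[OF \<pi>] by simp
    then obtain c where c: "c \<in> {1..n}" "\<pi> c = v" by blast
    have "\<not> b < c"
      using avoid ab c v unfolding contains321_def by auto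
    moreover have "c \<noteq> b" "c \<noteq> a" using c v ab by auto
    ultimately have "c \<in> {1..<b} - {a}" using c by auto
    then show "v \<in> \<pi> ` ({1..<b} - {a})" using c by blast
  qed
  then have "card {1..<\<pi> b} \<le> card (\<pi> ` ({1..<b} - {a}))" by (intro card_mono) auto
  also have "\<dots> \<le> card ({1..<b} - {a})" by (rule card_image_le) simp
  finally show False using ab \<open>\<not> \<pi> b < b\<close> by simp
qed

text \<open>The inverse avoids 321 as well and has the inversion (\<pi> b, \<pi> a).\<close>
lemma avoids321_inversion_left_end:
  assumes \<pi>: "\<pi> permutes {1..n}" and avoid: "\<not> contains321 n \<pi>"
    and ab: "1 \<le> a" "a < b" "b \<le> n" "\<pi> b < \<pi> a"
  shows "a < \<pi> a"
proof -
  have "1 \<le> \<pi> b" "\<pi> a \<le> n" using ab permutes_interval_bounds[OF \<pi>] by simp_all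
  moreover have "inv \<pi> (\<pi> a) < inv \<pi> (\<pi> b)" using ab permutes_inverses(2)[OF \<pi>] by simp
  moreover have "\<not> contains321 n (inv \<pi>)" using avoid contains321_inv_iff[OF \<pi>] by simp
  ultimately have "inv \<pi> (\<pi> a) < \<pi> a"
    using avoids321_inversion_right_end[OF permutes_inv[OF \<pi>], of "\<pi> b" "\<pi> a"] ab by simp
  then show ?thesis using permutes_inverses(2)[OF \<pi>] by simp
qed

lemma contains321_iff_inversion:
  assumes "\<pi> permutes {1..n}"
  shows "contains321 n \<pi> \<longleftrightarrow>
    (\<exists>a b. 1 \<le> a \<and> a < b \<and> b \<le> n \<and> \<pi> b < \<pi> a \<and> (b \<le> \<pi> b \<or> \<pi> a \<le> a))"
proof
  assume "contains321 n \<pi>"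
  then obtain i j k where ijk: "1 \<le> i" "i < j" "j < k" "k \<le> n" "\<pi> j < \<pi> i" "\<pi> k < \<pi> j"
    unfolding contains321_def by blast
  show "\<exists>a b. 1 \<le> a \<and> a < b \<and> b \<le> n \<and> \<pi> b < \<pi> a \<and> (b \<le> \<pi> b \<or> \<pi> a \<le> a)"
  proof (cases "j \<le> \<pi> j")
    case True
    then show ?thesis using ijk by (intro exI[of _ i] exI[of _ j]) auto
  next
    case False
    then show ?thesis using ijk by (intro exI[of _ j] exI[of _ k]) auto
  qed
next
  assume "\<exists>a b. 1 \<le> a \<and> a < b \<and> b \<le> n \<and> \<pi> b < \<pi> a \<and> (b \<le> \<pi> b \<or> \<pi> a \<le> a)"
  then show "contains321 n \<pi>"
    using avoids321_inversion_right_end[OF assms] avoids321_inversion_left_end[OF assms]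
    by (meson leD)
qed

definition cycle_perm :: "nat \<Rightarrow> (nat \<Rightarrow> nat) \<Rightarrow> nat \<Rightarrow> nat" where
  "cycle_perm n w = cycle_of_list (map w [1..<Suc n])"

lemma cycle_perm_permutes:
  assumes "w permutes {1..n}"
  shows "cycle_perm n w permutes {1..n}"
proof -
  have "set (map w [1..<Suc n]) = {1..n}"
    by (simp only: set_map set_upt atLeastLessThanSuc_atLeastAtMost permutes_image[OF assms])
  then show ?thesis using cycle_permutes unfolding cycle_perm_def by metis
qed

lemma funpow_cycle_perm:
  assumes w: "w permutes {1..n}" and i: "i \<in> {1..n}"
  shows "(cycle_perm n w ^^ k) (w i) = w ((i - 1 + k) mod n + 1)"
proof -
  define cs where "cs = map w [1..<Suc n]"
  have len_cs: "length cs = n" unfolding cs_def by simp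
  have nth_cs: "cs ! j = w (Suc j)" if "j < n" for j
    unfolding cs_def using that by (simp only: nth_map_upt diff_Suc_1 plus_1_eq_Suc)
  have len: "i - 1 < length cs" using i len_cs by auto
  have cs_i: "cs ! (i - 1) = w i" using nth_cs[of "i - 1"] i by auto
  have "distinct cs"
    unfolding cs_def using permutes_inj[OF w] by (simp add: distinct_map inj_on_subset)
  then have "map (cycle_perm n w ^^ k) cs = rotate k cs"
    unfolding cycle_perm_def cs_def by (rule cyclic_rotation)
  then have "(cycle_perm n w ^^ k) (cs ! (i - 1)) = rotate k cs ! (i - 1)"
    using len by (metis nth_map)
  also have "\<dots> = cs ! ((k + (i - 1)) mod n)"
    using nth_rotate[OF len] len_cs by simp
  finally show ?thesis
    using cs_i nth_cs[of "(k + (i - 1)) mod n"] i by (simp add: add.commute)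
qed

lemma cycle_perm_apply:
  assumes "w permutes {1..n}" "i \<in> {1..n}"
  shows "cycle_perm n w (w i) = w (i mod n + 1)"
  using funpow_cycle_perm[OF assms, of 1] assms(2) by simp

lemma cyclic_perm_cycle_perm:
  assumes w: "w permutes {1..n}"
  shows "cyclic_perm n (cycle_perm n w)"
  unfolding cyclic_perm_def
proof (intro conjI ballI cycle_perm_permutes[OF w])
  fix x assume x: "x \<in> {1..n}"
  obtain i where i: "i \<in> {1..n}" "w i = 1" using permutes_preimage[OF w, of 1] x by auto
  obtain j where j: "j \<in> {1..n}" "w j = x" using permutes_preimage[OF w x] by blast
  have "(i - 1 + (n + j - i)) mod n + 1 = j"
    using i j by (auto simp: mod_if)
  then have "(cycle_perm n w ^^ (n + j - i)) 1 = x"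
    using funpow_cycle_perm[OF w i(1), of "n + j - i"] i j by simp
  then show "\<exists>k. (cycle_perm n w ^^ k) 1 = x" ..
qed

lemma cycle_perm_eqI:
  assumes w: "w permutes {1..n}" and \<pi>: "\<pi> permutes {1..n}"
    and step: "\<And>i. i \<in> {1..n} \<Longrightarrow> \<pi> (w i) = w (i mod n + 1)"
  shows "cycle_perm n w = \<pi>"
proof
  fix x show "cycle_perm n w x = \<pi> x"
  proof (cases "x \<in> {1..n}")
    case True
    then obtain i where i: "i \<in> {1..n}" "w i = x" using permutes_preimage[OF w] by blast
    have "cycle_perm n w (w i) = \<pi> (w i)" using cycle_perm_apply[OF w i(1)] step[OF i(1)] by simp
    then show ?thesis using i by simp
  next
    case False
    then show ?thesis
      using permutes_not_in[OF cycle_perm_permutes[OF w]] permutes_not_in[OF \<pi>] by simp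
  qed
qed

lemma cyclic_perm_orbit:
  assumes \<pi>: "cyclic_perm n \<pi>" and x: "x \<in> {1..n}"
  shows "(\<pi> ^^ n) x = x" and "inj_on (\<lambda>k. (\<pi> ^^ k) x) {..<n}"
proof -
  have perm: "\<pi> permutes {1..n}" using \<pi> unfolding cyclic_perm_def by blast
  then have permutation: "permutation \<pi>" by (rule permutes_imp_permutation[OF finite_atLeastAtMost])
  have one: "(1::nat) \<in> {1..n}" using x by simp
  have "orbit \<pi> 1 = {1..n}"
    unfolding orbit_altdef_permutation[OF permutation]
  proof (intro set_eqI iffI)
    fix y
    show "y \<in> {(\<pi> ^^ k) 1 |k. True} \<Longrightarrow> y \<in> {1..n}"
      using permutes_in_funpow_image[OF perm one] by blast
    assume "y \<in> {1..n}"
    then obtain k where "(\<pi> ^^ k) 1 = y" using \<pi> unfolding cyclic_perm_def by blast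
    then show "y \<in> {(\<pi> ^^ k) 1 |k. True}" by blast
  qed
  then have "cyclic_on \<pi> {1..n}" using cyclic_on_singleI[OF one] by metis
  then have "orbit \<pi> x = {1..n}" using x unfolding cyclic_on_alldef by metis
  then have set_support: "set (support \<pi> x) = {1..n}"
    unfolding support_set[OF permutation] orbit_altdef_permutation[OF permutation] by blast
  have distinct: "distinct (support \<pi> x)" by (rule cycle_of_permutation[OF permutation])
  have "least_power \<pi> x = card {1..n}"
    using distinct_card[OF distinct] unfolding set_support by simp
  then have least_power: "least_power \<pi> x = n" by simp
  then show "(\<pi> ^^ n) x = x" using least_power_of_permutation(1)[OF permutation, of x] by simp
  show "inj_on (\<lambda>k. (\<pi> ^^ k) x) {..<n}"
    using distinct unfolding least_power distinct_map by (simp add: atLeast_upt)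
qed

definition cycle_word :: "nat \<Rightarrow> (nat \<Rightarrow> nat) \<Rightarrow> nat \<Rightarrow> nat" where
  "cycle_word n \<pi> i = (if i \<in> {1..<n} then (\<pi> ^^ i) n else i)"

lemma cycle_word_cycle_perm:
  assumes w: "w permutes {1..m}"
  shows "cycle_word (Suc m) (cycle_perm (Suc m) w) = w"
proof
  fix i
  have w': "w permutes {1..Suc m}" using permutes_subset[OF w] by auto
  have "w (Suc m) = Suc m" using permutes_not_in[OF w] by simp
  then have funpow: "(cycle_perm (Suc m) w ^^ k) (Suc m) = w ((m + k) mod Suc m + 1)" for k
    using funpow_cycle_perm[OF w', of "Suc m" k] by simp
  show "cycle_word (Suc m) (cycle_perm (Suc m) w) i = w i"
  proof (cases "i \<in> {1..<Suc m}")
    case True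
    then have "(m + i) mod Suc m + 1 = i" by (auto simp: mod_if)
    then show ?thesis using True funpow[of i] unfolding cycle_word_def by simp
  next
    case False
    then show ?thesis using permutes_not_in[OF w, of i] unfolding cycle_word_def by auto
  qed
qed

lemma cycle_word_eq_funpow:
  assumes "cyclic_perm n \<pi>" "i \<in> {1..n}"
  shows "cycle_word n \<pi> i = (\<pi> ^^ i) n"
proof (cases "i = n")
  case True
  then show ?thesis
    using cyclic_perm_orbit(1)[OF assms(1), of n] assms(2) unfolding cycle_word_def by simp
qed (use assms(2) in \<open>simp add: cycle_word_def\<close>)

lemma cycle_word_permutes:
  assumes \<pi>: "cyclic_perm (Suc m) \<pi>"
  shows "cycle_word (Suc m) \<pi> permutes {1..m}"
proof (rule bij_imp_permutes)
  let ?w = "cycle_word (Suc m) \<pi>"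
  have n: "Suc m \<in> {1..Suc m}" by simp
  have w: "?w i = (\<pi> ^^ i) (Suc m)" if "i \<in> {1..m}" for i
    using cycle_word_eq_funpow[OF \<pi>] that by simp
  have inj: "inj_on (\<lambda>k. (\<pi> ^^ k) (Suc m)) {..<Suc m}" by (rule cyclic_perm_orbit(2)[OF \<pi> n])
  have "inj_on (\<lambda>k. (\<pi> ^^ k) (Suc m)) {1..m}" by (rule inj_on_subset[OF inj]) auto
  moreover have "inj_on ?w {1..m} \<longleftrightarrow> inj_on (\<lambda>k. (\<pi> ^^ k) (Suc m)) {1..m}"
    by (rule inj_on_cong) (rule w)
  ultimately have "inj_on ?w {1..m}" by blast
  moreover have "?w ` {1..m} \<subseteq> {1..m}"
  proof
    fix y assume "y \<in> ?w ` {1..m}"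
    then obtain i where i: "i \<in> {1..m}" "y = (\<pi> ^^ i) (Suc m)" using w by auto
    have "y \<in> {1..Suc m}"
      using i permutes_in_funpow_image[OF _ n] \<pi> unfolding cyclic_perm_def by blast
    moreover have "y \<noteq> (\<pi> ^^ 0) (Suc m)" using i inj unfolding inj_on_def by fastforce
    ultimately show "y \<in> {1..m}" by auto
  qed
  ultimately show "bij_betw ?w {1..m} {1..m}"
    by (simp add: bij_betw_def endo_inj_surj)
  show "?w x = x" if "x \<notin> {1..m}" for x using that unfolding cycle_word_def by auto
qed

lemma cycle_perm_cycle_word:
  assumes \<pi>: "cyclic_perm (Suc m) \<pi>"
  shows "cycle_perm (Suc m) (cycle_word (Suc m) \<pi>) = \<pi>"
proof (rule cycle_perm_eqI)
  let ?w = "cycle_word (Suc m) \<pi>"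
  show "?w permutes {1..Suc m}" using permutes_subset[OF cycle_word_permutes[OF \<pi>]] by auto
  show "\<pi> permutes {1..Suc m}" using \<pi> unfolding cyclic_perm_def by blast
  fix i assume i: "i \<in> {1..Suc m}"
  have "\<pi> (?w i) = (\<pi> ^^ Suc i) (Suc m)" using cycle_word_eq_funpow[OF \<pi> i] by simp
  also have "\<dots> = ?w (i mod Suc m + 1)"
  proof (cases "i = Suc m")
    case True
    then show ?thesis
      using cyclic_perm_orbit(1)[OF \<pi>, of "Suc m"] cycle_word_eq_funpow[OF \<pi>, of 1] by simp
  next
    case False
    then show ?thesis using i cycle_word_eq_funpow[OF \<pi>, of "Suc i"] by simp
  qed
  finally show "\<pi> (?w i) = ?w (i mod Suc m + 1)" .
qed

locale cycle_notation =
  fixes m :: nat and w \<pi> :: "nat \<Rightarrow> nat"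
  assumes w_permutes: "w permutes {1..m}"
    and \<pi>_step: "\<And>i. i \<in> {1..m} \<Longrightarrow> \<pi> (w i) = w (Suc i)"
    and \<pi>_last: "\<pi> (Suc m) = w 1"
begin

lemma w_eq_iff: "w i = w j \<longleftrightarrow> i = j"
  using permutes_inj[OF w_permutes] by (simp add: inj_eq)

lemma w_bounds: "i \<in> {1..m} \<Longrightarrow> w i \<in> {1..m}"
  using permutes_in_image[OF w_permutes] by simp

lemma w_Suc_m: "w (Suc m) = Suc m"
  using permutes_not_in[OF w_permutes] by simp

lemma w_preimage: "a \<in> {1..m} \<Longrightarrow> \<exists>i\<in>{1..m}. w i = a"
  using permutes_preimage[OF w_permutes] by metis

lemma \<pi>_w_le: "i \<in> {1..m} \<Longrightarrow> \<pi> (w i) \<le> Suc m"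
  using \<pi>_step w_bounds[of "Suc i"] w_Suc_m by (cases "i = m") auto

lemma excedance_inversion_imp_pattern:
  assumes ab: "1 \<le> a" "a < b" "b \<le> Suc m" "\<pi> b < \<pi> a" "b \<le> \<pi> b"
  shows "has_1423 m w \<or> has_2314 m w \<or> has_231 m w"
proof -
  have "b \<noteq> Suc m"
    using ab \<pi>_last w_bounds[of 1] by (cases "m = 0") auto
  then obtain j where j: "j \<in> {1..m}" "w j = b" using ab w_preimage[of b] by auto
  obtain i where i: "i \<in> {1..m}" "w i = a" using ab \<open>b \<noteq> Suc m\<close> w_preimage[of a] by auto
  have "j \<noteq> m" using ab i j \<pi>_step[of m] \<pi>_w_le[of i] w_Suc_m by auto
  then have jm: "Suc j \<le> m" using j by simp
  have b: "\<pi> b = w (Suc j)" "w j < w (Suc j)"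
    using j \<pi>_step ab w_eq_iff[of j "Suc j"] by auto
  show ?thesis
  proof (cases "i = m")
    case True
    then have "Suc j \<noteq> m" using ab b i j by auto
    then have "has_231 m w" unfolding has_231_def
      using True i j jm ab b \<pi>_step w_Suc_m by (intro exI[of _ j]) auto
    then show ?thesis by simp
  next
    case False
    then have a: "\<pi> a = w (Suc i)" "Suc i \<le> m" using i \<pi>_step by auto
    show ?thesis
    proof (cases "i < j")
      case True
      then have "j \<noteq> Suc i" using a b ab j by auto
      then have "has_1423 m w" unfolding has_1423_def
        using True i j jm ab a b by (intro exI[of _ i] exI[of _ j]) auto
      then show ?thesis by simp
    next
      case False
      then have "i \<noteq> Suc j" "i \<noteq> j" using a b ab i j by auto
      then have "has_2314 m w" unfolding has_2314_def
        using False i j a ab b by (intro exI[of _ j] exI[of _ i]) auto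
      then show ?thesis by simp
    qed
  qed
qed

lemma deficiency_inversion_imp_pattern:
  assumes ab: "1 \<le> a" "a < b" "b \<le> Suc m" "\<pi> b < \<pi> a" "\<pi> a \<le> a"
  shows "has_3241 m w \<or> has_4132 m w \<or> has_132 m w"
proof -
  obtain i where i: "i \<in> {1..m}" "w i = a" using ab w_preimage[of a] by auto
  have "i \<noteq> m" using ab i \<pi>_step[of m] w_Suc_m by auto
  then have im: "Suc i \<le> m" using i by simp
  have a: "\<pi> a = w (Suc i)" "w (Suc i) < w i"
    using i \<pi>_step ab w_eq_iff[of i "Suc i"] by auto
  show ?thesis
  proof (cases "b = Suc m")
    case True
    then have "i \<noteq> 1" using a ab i \<pi>_last by auto
    then have "has_132 m w" unfolding has_132_def
      using True i im a ab \<pi>_last by (intro exI[of _ i]) auto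
    then show ?thesis by simp
  next
    case False
    then obtain j where j: "j \<in> {1..m}" "w j = b" using ab w_preimage[of b] by auto
    have "j \<noteq> m" using ab i j \<pi>_step[of m] im a w_bounds[of "Suc i"] w_Suc_m by auto
    then have jm: "Suc j \<le> m" using j by simp
    have b: "\<pi> b = w (Suc j)" using j \<pi>_step by auto
    show ?thesis
    proof (cases "i < j")
      case True
      then have "j \<noteq> Suc i" using a ab i j by auto
      then have "has_3241 m w" unfolding has_3241_def
        using True i j jm ab a b by (intro exI[of _ i] exI[of _ j]) auto
      then show ?thesis by simp
    next
      case False
      then have "i \<noteq> Suc j" "i \<noteq> j" using a b ab i j by auto
      then have "has_4132 m w" unfolding has_4132_def
        using False i im j a ab b by (intro exI[of _ j] exI[of _ i]) auto
      then show ?thesis by simp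
    qed
  qed
qed

lemma pattern_imp_excedance_inversion:
  assumes "has_1423 m w \<or> has_2314 m w \<or> has_231 m w"
  shows "\<exists>a b. 1 \<le> a \<and> a < b \<and> b \<le> Suc m \<and> \<pi> b < \<pi> a \<and> b \<le> \<pi> b"
  using assms
proof (elim disjE)
  assume "has_1423 m w"
  then obtain i j where ij: "1 \<le> i" "i + 2 \<le> j" "j \<le> m - 1"
    "w i < w j" "w j < w (j + 1)" "w (j + 1) < w (i + 1)" unfolding has_1423_def by blast
  then have "i \<in> {1..m}" "j \<in> {1..m}" by auto
  then have "\<pi> (w i) = w (i + 1)" "\<pi> (w j) = w (j + 1)" "1 \<le> w i" "w j \<le> Suc m"
    using \<pi>_step w_bounds[of i] w_bounds[of j] by auto
  then show ?thesis using ij by (intro exI[of _ "w i"] exI[of _ "w j"]) simp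
next
  assume "has_2314 m w"
  then obtain i j where ij: "1 \<le> i" "i + 2 \<le> j" "j \<le> m - 1"
    "w j < w i" "w i < w (i + 1)" "w (i + 1) < w (j + 1)" unfolding has_2314_def by blast
  then have "i \<in> {1..m}" "j \<in> {1..m}" by auto
  then have "\<pi> (w i) = w (i + 1)" "\<pi> (w j) = w (j + 1)" "1 \<le> w j" "w i \<le> Suc m"
    using \<pi>_step w_bounds[of i] w_bounds[of j] by auto
  then show ?thesis using ij by (intro exI[of _ "w j"] exI[of _ "w i"]) simp
next
  assume "has_231 m w"
  then obtain i where i: "1 \<le> i" "i + 1 \<le> m - 1" "w m < w i" "w i < w (i + 1)"
    unfolding has_231_def by blast
  then have "\<pi> (w m) = Suc m" "\<pi> (w i) = w (i + 1)" "1 \<le> w m" "w (i + 1) \<le> m"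
    using \<pi>_step w_bounds w_Suc_m by auto
  then show ?thesis using i by (intro exI[of _ "w m"] exI[of _ "w i"]) simp
qed

lemma pattern_imp_deficiency_inversion:
  assumes "has_3241 m w \<or> has_4132 m w \<or> has_132 m w"
  shows "\<exists>a b. 1 \<le> a \<and> a < b \<and> b \<le> Suc m \<and> \<pi> b < \<pi> a \<and> \<pi> a \<le> a"
  using assms
proof (elim disjE)
  assume "has_3241 m w"
  then obtain i j where ij: "1 \<le> i" "i + 2 \<le> j" "j \<le> m - 1"
    "w (j + 1) < w (i + 1)" "w (i + 1) < w i" "w i < w j" unfolding has_3241_def by blast
  then have "i \<in> {1..m}" "j \<in> {1..m}" by auto
  then have "\<pi> (w i) = w (i + 1)" "\<pi> (w j) = w (j + 1)" "1 \<le> w i" "w j \<le> Suc m"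
    using \<pi>_step w_bounds[of i] w_bounds[of j] by auto
  then show ?thesis using ij by (intro exI[of _ "w i"] exI[of _ "w j"]) simp
next
  assume "has_4132 m w"
  then obtain i j where ij: "1 \<le> i" "i + 2 \<le> j" "j \<le> m - 1"
    "w (i + 1) < w (j + 1)" "w (j + 1) < w j" "w j < w i" unfolding has_4132_def by blast
  then have "i \<in> {1..m}" "j \<in> {1..m}" by auto
  then have "\<pi> (w i) = w (i + 1)" "\<pi> (w j) = w (j + 1)" "1 \<le> w j" "w i \<le> Suc m"
    using \<pi>_step w_bounds[of i] w_bounds[of j] by auto
  then show ?thesis using ij by (intro exI[of _ "w j"] exI[of _ "w i"]) simp
next
  assume "has_132 m w"
  then obtain j where j: "2 \<le> j" "j \<le> m - 1" "w 1 < w (j + 1)" "w (j + 1) < w j"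
    unfolding has_132_def by blast
  then have "\<pi> (w j) = w (j + 1)" "1 \<le> w j" "w j \<le> m"
    using \<pi>_step w_bounds by auto
  then show ?thesis using j \<pi>_last by (intro exI[of _ "w j"] exI[of _ "Suc m"]) simp
qed

lemma contains321_iff_patterns:
  assumes "\<pi> permutes {1..Suc m}"
  shows "contains321 (Suc m) \<pi> \<longleftrightarrow>
    has_3241 m w \<or> has_1423 m w \<or> has_4132 m w \<or> has_2314 m w \<or> has_231 m w \<or> has_132 m w"
  unfolding contains321_iff_inversion[OF assms]
  using excedance_inversion_imp_pattern deficiency_inversion_imp_pattern
    pattern_imp_excedance_inversion pattern_imp_deficiency_inversion
  by metis

end

lemma cycle_perm_in_C321_iff:
  assumes w: "w permutes {1..m}"
  shows "cycle_perm (Suc m) w \<in> C321 (Suc m) \<longleftrightarrow> w \<in> A_set m"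
proof -
  have w': "w permutes {1..Suc m}" using permutes_subset[OF w] by auto
  have "w (Suc m) = Suc m" using permutes_not_in[OF w] by simp
  then interpret cycle_notation m w "cycle_perm (Suc m) w"
    using w cycle_perm_apply[OF w', of "Suc m"] cycle_perm_apply[OF w'] by unfold_locales auto
  show ?thesis
    using contains321_iff_patterns[OF cycle_perm_permutes[OF w']] cyclic_perm_cycle_perm[OF w'] w
    unfolding C321_def A_set_def by auto
qed

lemma bij_betw_cycle_perm_A_set_C321:
  "bij_betw (cycle_perm (Suc m)) (A_set m) (C321 (Suc m))"
proof (rule bij_betw_byWitness[where f' = "cycle_word (Suc m)"])
  show "\<forall>w\<in>A_set m. cycle_word (Suc m) (cycle_perm (Suc m) w) = w"
    unfolding A_set_def using cycle_word_cycle_perm by blast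
  show "\<forall>\<pi>\<in>C321 (Suc m). cycle_perm (Suc m) (cycle_word (Suc m) \<pi>) = \<pi>"
    unfolding C321_def using cycle_perm_cycle_word by blast
  show "cycle_perm (Suc m) ` A_set m \<subseteq> C321 (Suc m)"
    using cycle_perm_in_C321_iff unfolding A_set_def by blast
  show "cycle_word (Suc m) ` C321 (Suc m) \<subseteq> A_set m"
  proof
    fix w assume "w \<in> cycle_word (Suc m) ` C321 (Suc m)"
    then obtain \<pi> where \<pi>: "\<pi> \<in> C321 (Suc m)" "w = cycle_word (Suc m) \<pi>" by blast
    then have "cyclic_perm (Suc m) \<pi>" unfolding C321_def by simp
    then show "w \<in> A_set m"
      using cycle_perm_in_C321_iff[OF cycle_word_permutes] cycle_perm_cycle_word \<pi> by simp
  qed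
qed

theorem mainTheorem2:
  fixes n :: nat
  assumes "n \<ge> 2"
  shows "card (C321 n) = card (A_set (n - 1))"
proof -
  have "n = Suc (n - 1)" using assms by simp
  then show ?thesis
    using bij_betw_same_card[OF bij_betw_cycle_perm_A_set_C321[of "n - 1"]] by metis
qed

end
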